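(* Let $m\ge1$ and let $q^{(1)}_k,\dots,q^{(m)}_k$, $k=1,\dots,d$, be given non-negative numbers. Over all $m$-tuples $(Q^{(1)},\dots,Q^{(m)})$ of $d\times d$ positive semidefinite matrices with prescribed diagonals $Q^{(i)}_{kk}=q^{(i)}_k$ for all $i,k$, the maximal value of the operator norm $\|Q^{(1)}+\dots+Q^{(m)}\|_\infty$ is attained when each $Q^{(i)}$ is the rank one matrix with non-negative entries $Q^{(i)}_{jk}=\sqrt{q^{(i)}_jq^{(i)}_k}$.
   Context: $\|\cdot\|_\infty$ denotes the operator (spectral) norm. *)

theory Defs
  imports "HOL-Analysis.Analysis"
begin

text \<open>Complex d x d matrices are modelled as complex^'n^'n, with d = CARD('n).\<close>

definition hermitian_mat :: "complex^'n^'n \<Rightarrow> bool" where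
  "hermitian_mat A \<longleftrightarrow> (\<forall>j k. A $ j $ k = cnj (A $ k $ j))"

definition psd_mat :: "complex^'n^'n \<Rightarrow> bool" where
  "psd_mat A \<longleftrightarrow> hermitian_mat A \<and>
     (\<forall>x::complex^'n. 0 \<le> Re (\<Sum>j\<in>UNIV. \<Sum>k\<in>UNIV. cnj (x $ j) * A $ j $ k * x $ k))"

definition op_norm :: "complex^'n^'n \<Rightarrow> real" where
  "op_norm A = onorm (\<lambda>x. A *v x)"

end

theory Submission
  imports Defs
begin

text \<open>Looking at its 2x2 principal submatrices, every entry of a positive semidefinite
  matrix is bounded in modulus by the geometric mean of the two corresponding diagonal
  entries, and the rank one matrices with entries \<open>sqrt (q\<^sub>j q\<^sub>k)\<close> attain these bounds
  with non-negative entries. Hence every admissible sum of the \<open>Q\<close>'s is entrywise dominated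
  in modulus by the non-negative matrix \<open>B\<close> obtained by summing the rank one matrices.
  A domination \<open>|A\<^sub>j\<^sub>k| \<le> B\<^sub>j\<^sub>k\<close> gives \<open>|A x| \<le> B |x|\<close> componentwise, so the operator
  norm of \<open>A\<close> is at most that of \<open>B\<close>.\<close>

lemma sum_UNIV_two_points:
  fixes f :: "'n::finite \<Rightarrow> 'a::comm_monoid_add"
  assumes "j \<noteq> k" "\<And>i. i \<noteq> j \<Longrightarrow> i \<noteq> k \<Longrightarrow> f i = 0"
  shows "sum f UNIV = f j + f k"
proof -
  have "sum f UNIV = sum f {j, k}"
    by (rule sum.mono_neutral_right) (use assms in auto)
  then show ?thesis using assms by simp
qed

lemma binary_quadratic_form_nonneg_imp_sq_le:
  fixes a b \<beta> :: real
  assumes "\<And>s t. 0 \<le> a * s\<^sup>2 + 2 * \<beta> * s * t + b * t\<^sup>2"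
  shows "\<beta>\<^sup>2 \<le> a * b"
proof -
  consider "a > 0" | "b > 0" | "a \<le> 0" "b \<le> 0" by linarith
  then show ?thesis
  proof cases
    case 1
    from assms[of "- \<beta>" a] have "0 \<le> a * (a * b - \<beta>\<^sup>2)"
      by (simp add: power2_eq_square algebra_simps)
    with 1 show ?thesis by (simp add: zero_le_mult_iff)
  next
    case 2
    from assms[of b "- \<beta>"] have "0 \<le> b * (a * b - \<beta>\<^sup>2)"
      by (simp add: power2_eq_square algebra_simps)
    with 2 show ?thesis by (simp add: zero_le_mult_iff)
  next
    case 3
    from assms[of 1 "- \<beta>"] have "\<beta>\<^sup>2 \<le> a + b * \<beta>\<^sup>2 - \<beta>\<^sup>2"
      by (simp add: power2_eq_square algebra_simps)
    moreover have "0 \<le> a * b" "b * \<beta>\<^sup>2 \<le> 0"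
      using 3 by (simp_all add: mult_nonpos_nonpos mult_nonpos_nonneg)
    ultimately show ?thesis using 3 by linarith
  qed
qed

lemma complex_polar_phase:
  fixes z :: complex
  obtains \<omega> where "cmod \<omega> = 1" "z * cnj \<omega> = complex_of_real (cmod z)"
proof (cases "z = 0")
  case True
  then show ?thesis by (intro that[of 1]) simp_all
next
  case False
  have "z * cnj (sgn z) = complex_of_real (cmod z)"
    using False by (simp add: sgn_div_norm scaleR_conv_of_real complex_norm_square[symmetric]
        divide_simps power2_eq_square)
  then show ?thesis using False by (intro that[of "sgn z"]) (simp_all add: norm_sgn)
qed

lemma Re_hermitian_form_2x2:
  "Re (cnj u * a * u + cnj u * c * v + cnj v * cnj c * u + cnj v * b * v)
    = (cmod u)\<^sup>2 * Re a + 2 * Re (cnj u * c * v) + (cmod v)\<^sup>2 * Re b"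
proof -
  have diag: "Re (cnj w * z * w) = (cmod w)\<^sup>2 * Re z" for w z
    unfolding cmod_power2 by (simp add: power2_eq_square algebra_simps)
  have "cnj v * cnj c * u = cnj (cnj u * c * v)"
    by (simp add: mult_ac)
  then show ?thesis
    unfolding plus_complex.sel diag by (simp only: cnj.sel)
qed

lemma psd_mat_principal_2x2:
  fixes A :: "complex^'n::finite^'n"
  assumes "psd_mat A" "j \<noteq> k"
  shows "0 \<le> (cmod u)\<^sup>2 * Re (A$j$j) + 2 * Re (cnj u * A$j$k * v) + (cmod v)\<^sup>2 * Re (A$k$k)"
proof -
  define x :: "complex^'n" where "x = (\<chi> i. if i = j then u else if i = k then v else 0)"
  let ?g = "\<lambda>j' k'. cnj (x $ j') * A $ j' $ k' * x $ k'"
  have rows: "(\<Sum>k'\<in>UNIV. ?g j' k') = ?g j' j + ?g j' k" for j'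
    by (rule sum_UNIV_two_points) (use assms(2) in \<open>auto simp: x_def\<close>)
  have "(\<Sum>j'\<in>UNIV. \<Sum>k'\<in>UNIV. ?g j' k') = (?g j j + ?g j k) + (?g k j + ?g k k)"
    unfolding rows by (rule sum_UNIV_two_points) (use assms(2) in \<open>auto simp: x_def\<close>)
  also have "\<dots> = cnj u * A$j$j * u + cnj u * A$j$k * v + cnj v * cnj (A$j$k) * u + cnj v * A$k$k * v"
  proof -
    have "A$k$j = cnj (A$j$k)"
      using assms(1) unfolding psd_mat_def hermitian_mat_def by blast
    then show ?thesis using assms(2) by (simp add: x_def add.assoc)
  qed
  finally have "Re (\<Sum>j'\<in>UNIV. \<Sum>k'\<in>UNIV. ?g j' k')
      = (cmod u)\<^sup>2 * Re (A$j$j) + 2 * Re (cnj u * A$j$k * v) + (cmod v)\<^sup>2 * Re (A$k$k)"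
    by (simp only: Re_hermitian_form_2x2)
  moreover have "0 \<le> Re (\<Sum>j'\<in>UNIV. \<Sum>k'\<in>UNIV. ?g j' k')"
    using assms(1) unfolding psd_mat_def by blast
  ultimately show ?thesis by simp
qed

lemma psd_mat_entry_le:
  fixes A :: "complex^'n::finite^'n"
  assumes psd: "psd_mat A"
  shows "cmod (A$j$k) \<le> sqrt (Re (A$j$j) * Re (A$k$k))"
proof (cases "j = k")
  case True
  have "A$j$j = cnj (A$j$j)"
    using psd unfolding psd_mat_def hermitian_mat_def by blast
  then have "Im (A$j$j) = 0" by (metis cnj.sel(2) neg_equal_zero)
  then show ?thesis using True by (simp add: cmod_def)
next
  case False
  obtain \<omega> where \<omega>: "cmod \<omega> = 1" "A$j$k * cnj \<omega> = complex_of_real (cmod (A$j$k))"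
    by (rule complex_polar_phase)
  \<comment> \<open>Rotating the second coordinate by the phase of \<open>A$j$k\<close> leaves a real binary form.\<close>
  have "0 \<le> Re (A$j$j) * s\<^sup>2 + 2 * (- cmod (A$j$k)) * s * t + Re (A$k$k) * t\<^sup>2" for s t
  proof -
    have "cnj (complex_of_real s) * A$j$k * (- complex_of_real t * cnj \<omega>)
        = complex_of_real (- s * t * cmod (A$j$k))"
      by (simp add: mult.assoc mult.left_commute[of _ "A$j$k"] \<omega>(2))
    then have cross: "Re (cnj (complex_of_real s) * A$j$k * (- complex_of_real t * cnj \<omega>))
        = - s * t * cmod (A$j$k)"
      by (simp only: Re_complex_of_real)
    have "cmod (- complex_of_real t * cnj \<omega>) = \<bar>t\<bar>"
      by (simp add: norm_mult \<omega>(1))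
    with psd_mat_principal_2x2[OF psd False, of "complex_of_real s" "- complex_of_real t * cnj \<omega>"]
    show ?thesis
      unfolding cross by (simp add: algebra_simps)
  qed
  then have "(cmod (A$j$k))\<^sup>2 \<le> Re (A$j$j) * Re (A$k$k)"
    using binary_quadratic_form_nonneg_imp_sq_le[of "Re (A$j$j)" "- cmod (A$j$k)" "Re (A$k$k)"]
    by simp
  then show ?thesis by (simp add: real_le_rsqrt)
qed

lemma cmod_sum_psd_mat_entry_le:
  fixes Q :: "'i \<Rightarrow> complex^'n::finite^'n"
  assumes "\<And>i. i \<in> I \<Longrightarrow> psd_mat (Q i)"
  shows "cmod ((\<Sum>i\<in>I. Q i) $ j $ k) \<le> (\<Sum>i\<in>I. sqrt (Re (Q i $ j $ j) * Re (Q i $ k $ k)))"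
proof -
  have "cmod ((\<Sum>i\<in>I. Q i) $ j $ k) \<le> (\<Sum>i\<in>I. cmod (Q i $ j $ k))"
    by (simp add: sum_component norm_sum)
  also have "\<dots> \<le> (\<Sum>i\<in>I. sqrt (Re (Q i $ j $ j) * Re (Q i $ k $ k)))"
    by (rule sum_mono) (rule psd_mat_entry_le[OF assms])
  finally show ?thesis .
qed

lemma psd_mat_rank_one:
  fixes v :: "complex^'n::finite"
  shows "psd_mat (\<chi> j k. cnj (v $ j) * v $ k)"
  unfolding psd_mat_def hermitian_mat_def
proof (intro conjI allI)
  fix x :: "complex^'n"
  define w where "w = (\<Sum>k\<in>UNIV. v $ k * x $ k)"
  have "(\<Sum>j\<in>UNIV. \<Sum>k\<in>UNIV. cnj (x $ j) * (\<chi> j k. cnj (v $ j) * v $ k) $ j $ k * x $ k)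
      = cnj w * w"
    unfolding w_def cnj_sum sum_product by (simp add: mult_ac)
  then show "0 \<le> Re (\<Sum>j\<in>UNIV. \<Sum>k\<in>UNIV. cnj (x $ j) * (\<chi> j k. cnj (v $ j) * v $ k) $ j $ k * x $ k)"
    by simp
qed simp

lemma op_norm_le_entrywise_dominated:
  fixes A :: "complex^'n::finite^'n"
  assumes dom: "\<And>j k. cmod (A$j$k) \<le> b j k"
  shows "op_norm A \<le> op_norm (\<chi> j k. complex_of_real (b j k))"
  unfolding op_norm_def
proof (rule onorm_le)
  fix x :: "complex^'n"
  define B :: "complex^'n^'n" where "B = (\<chi> j k. complex_of_real (b j k))"
  define y :: "complex^'n" where "y = (\<chi> k. complex_of_real (cmod (x $ k)))"
  have "norm (A *v x) \<le> norm (B *v y)"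
  proof (rule norm_le_componentwise_cart)
    fix j
    have "norm ((A *v x) $ j) \<le> (\<Sum>k\<in>UNIV. cmod (A$j$k * x $ k))"
      unfolding matrix_vector_mult_def by (simp add: norm_sum)
    also have "\<dots> \<le> (\<Sum>k\<in>UNIV. b j k * cmod (x $ k))"
      by (rule sum_mono) (simp add: norm_mult dom mult_right_mono)
    also have "\<dots> = norm ((B *v y) $ j)"
    proof -
      have "0 \<le> (\<Sum>k\<in>UNIV. b j k * cmod (x $ k))"
        using dom by (meson norm_ge_zero order_trans mult_nonneg_nonneg sum_nonneg)
      then show ?thesis
        by (simp add: matrix_vector_mult_def B_def y_def flip: of_real_mult of_real_sum)
    qed
    finally show "norm ((A *v x) $ j) \<le> norm ((B *v y) $ j)" .
  qed
  also have "\<dots> \<le> onorm ((*v) B) * norm y"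
    by (rule onorm[OF matrix_vector_mul_bounded_linear])
  also have "norm y = norm x"
    by (simp add: y_def norm_vec_def)
  finally show "norm (A *v x) \<le> onorm ((*v) B) * norm x"
    unfolding B_def .
qed

theorem mainTheorem5:
  fixes m :: nat and q :: "nat \<Rightarrow> 'n::finite \<Rightarrow> real"
  assumes "m \<ge> 1"
    and "\<And>i k. i < m \<Longrightarrow> q i k \<ge> 0"
  defines "R \<equiv> (\<lambda>i. (\<chi> j k. complex_of_real (sqrt (q i j * q i k))) :: complex^'n^'n)"
  shows "(\<forall>i<m. psd_mat (R i) \<and> (\<forall>k. R i $ k $ k = complex_of_real (q i k)))
    \<and> (\<forall>Q :: nat \<Rightarrow> complex^'n^'n.
          (\<forall>i<m. psd_mat (Q i) \<and> (\<forall>k. Q i $ k $ k = complex_of_real (q i k)))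
          \<longrightarrow> op_norm (\<Sum>i<m. Q i) \<le> op_norm (\<Sum>i<m. R i))"
proof (intro conjI allI impI)
  fix i assume "i < m"
  define v :: "complex^'n" where "v = (\<chi> k. complex_of_real (sqrt (q i k)))"
  have "R i = (\<chi> j k. cnj (v $ j) * v $ k)"
    by (simp add: R_def v_def real_sqrt_mult vec_eq_iff)
  then show "psd_mat (R i)"
    by (simp only: psd_mat_rank_one)
  show "R i $ k $ k = complex_of_real (q i k)" for k
    using assms(2)[OF \<open>i < m\<close>] by (simp add: R_def)
next
  fix Q :: "nat \<Rightarrow> complex^'n^'n"
  assume Q: "\<forall>i<m. psd_mat (Q i) \<and> (\<forall>k. Q i $ k $ k = complex_of_real (q i k))"
  have "cmod ((\<Sum>i<m. Q i) $ j $ k) \<le> (\<Sum>i<m. sqrt (q i j * q i k))" for j k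
    using cmod_sum_psd_mat_entry_le[of "{..<m}" Q j k] Q by simp
  then have "op_norm (\<Sum>i<m. Q i) \<le> op_norm (\<chi> j k. complex_of_real (\<Sum>i<m. sqrt (q i j * q i k)))"
    by (rule op_norm_le_entrywise_dominated)
  also have "(\<chi> j k. complex_of_real (\<Sum>i<m. sqrt (q i j * q i k))) = (\<Sum>i<m. R i)"
    by (simp add: R_def vec_eq_iff sum_component)
  finally show "op_norm (\<Sum>i<m. Q i) \<le> op_norm (\<Sum>i<m. R i)" .
qed

end
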